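(* Let $n\ge1$ and let $\mathcal{S}$ be a discrete subgroup of $O(n+1)$ satisfying the spanning property. Any maximizer over $\mathcal{K}_0(\mathcal{S})$ (with positive volume) of the functional $$\mathcal{F}_{-\infty}(\Omega)=V(\Omega)\Big/\big(\min_{\mathbb{S}^n}h_\Omega\big)^{n+1}$$ is an $\mathcal{S}$-invariant polytope.
   Context: $\mathcal{K}_0(\mathcal{S})$ is the set of convex bodies in $\mathbb{R}^{n+1}$ containing the origin and invariant under all $\phi\in\mathcal{S}$; $h_\Omega$ is the support function; $V(\Omega)=(n+1)|\Omega|$. Spanning property: for every $a\in\mathbb{S}^n$, $\mathrm{conv}\{\phi(a):\phi\in\mathcal{S}\}$ is a non-degenerate $(n+1)$-dimensional polytope. *)

theory Defs
  imports "HOL-Analysis.Analysis"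
begin

text \<open>Ambient space R^(n+1) is real^'n with CARD('n) = n+1.
  Orthogonal maps are represented by orthogonal matrices acting via *v.\<close>

definition orth_subgroup :: "(real^'n^'n) set \<Rightarrow> bool" where
  "orth_subgroup S \<longleftrightarrow> S \<subseteq> {A. orthogonal_matrix A} \<and> mat 1 \<in> S \<and>
     (\<forall>A\<in>S. \<forall>B\<in>S. A ** B \<in> S) \<and> (\<forall>A\<in>S. matrix_inv A \<in> S)"

definition discrete_set :: "(real^'n^'n) set \<Rightarrow> bool" where
  "discrete_set S \<longleftrightarrow> (\<forall>A\<in>S. \<exists>e>0. \<forall>B\<in>S. norm (B - A) < e \<longrightarrow> B = A)"

definition spanning_property :: "(real^'n^'n) set \<Rightarrow> bool" where
  "spanning_property S \<longleftrightarrow> (\<forall>a \<in> sphere (0::real^'n) 1.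
      polytope (convex hull ((\<lambda>A. A *v a) ` S)) \<and>
      aff_dim (convex hull ((\<lambda>A. A *v a) ` S)) = int CARD('n))"

definition convex_body :: "(real^'n) set \<Rightarrow> bool" where
  "convex_body K \<longleftrightarrow> compact K \<and> convex K \<and> K \<noteq> {}"

definition K0 :: "(real^'n^'n) set \<Rightarrow> (real^'n) set set" where
  "K0 S = {K. convex_body K \<and> 0 \<in> K \<and> (\<forall>A\<in>S. (\<lambda>x. A *v x) ` K = K)}"

definition support_fn :: "(real^'n) set \<Rightarrow> real^'n \<Rightarrow> real" where
  "support_fn K u = (SUP x\<in>K. x \<bullet> u)"

definition vol_V :: "(real^'n) set \<Rightarrow> real" where
  "vol_V K = real CARD('n) * measure lebesgue K"

definition F_minus_inf :: "(real^'n) set \<Rightarrow> real" where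
  "F_minus_inf K = vol_V K / (INF u\<in>sphere 0 1. support_fn K u) ^ CARD('n)"

end

theory Submission
  imports Defs
begin

text \<open>Let the support function h of a maximizer \<Omega> attain its minimum r over the sphere at u.
  By the spanning property the orbit B of u under S is a finite spanning set of unit vectors with
  vanishing sum (a nonzero sum would be a fixed direction of S, whose orbit is a single point).
  Hence P = {x. b \<bullet> x \<le> r for all b \<in> B} is an S-invariant polytope. It contains \<Omega>, since
  b \<bullet> x \<le> h b = h u = r by invariance of h, and the minimum of its support function is still r,
  attained at u. Maximality then gives |P| \<le> |\<Omega>|, so P - \<Omega> is a null set; as P is convex with
  nonempty interior and \<Omega> is closed, this forces P = \<Omega>.\<close>

lemma cINF_eq_minimum:
  fixes f :: "'a \<Rightarrow> 'b::conditionally_complete_lattice"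
  assumes "x0 \<in> X" "\<And>x. x \<in> X \<Longrightarrow> f x0 \<le> f x"
  shows "(INF x\<in>X. f x) = f x0"
  using assms by (intro cInf_eq_minimum) auto

lemma orthogonal_matrix_inv:
  fixes A :: "real^'n^'n"
  assumes "orthogonal_matrix A"
  shows "matrix_inv A = transpose A"
proof -
  have "A ** transpose A = mat 1 \<and> transpose A ** A = mat 1"
    using assms by (simp add: orthogonal_matrix_def)
  then have inv: "A ** matrix_inv A = mat 1 \<and> matrix_inv A ** A = mat 1"
    unfolding matrix_inv_def by (rule someI)
  have "matrix_inv A = (transpose A ** A) ** matrix_inv A"
    using assms by (simp add: orthogonal_matrix_def)
  also have "\<dots> = transpose A"
    using inv by (metis matrix_mul_assoc matrix_mul_rid)
  finally show ?thesis .
qed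

lemma inner_matrix_vector_mul_transpose:
  fixes A :: "real^'n^'m"
  shows "(A *v x) \<bullet> y = x \<bullet> (transpose A *v y)"
  by (metis dot_lmul_matrix inner_commute transpose_matrix_vector)

lemma orthogonal_matrix_inner:
  fixes A :: "real^'n^'n"
  assumes "orthogonal_matrix A"
  shows "(A *v x) \<bullet> (A *v y) = x \<bullet> y"
  using assms
  by (simp add: inner_matrix_vector_mul_transpose matrix_vector_mul_assoc orthogonal_matrix_def)

lemma orthogonal_matrix_norm:
  fixes A :: "real^'n^'n"
  assumes "orthogonal_matrix A"
  shows "norm (A *v x) = norm x"
  using orthogonal_matrix_inner[OF assms, of x x] by (simp add: norm_eq_sqrt_inner)

lemma orthogonal_matrix_vector_mul_sum:
  fixes A :: "real^'n^'n"
  assumes "orthogonal_matrix A" "(\<lambda>x. A *v x) ` X = X"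
  shows "A *v \<Sum>X = \<Sum>X"
proof -
  have "inj ((*v) A)"
    using assms(1) by (intro inj_on_inverseI[where g = "(*v) (transpose A)"])
      (simp add: matrix_vector_mul_assoc orthogonal_matrix_def)
  then have "(\<Sum>x\<in>X. A *v x) = \<Sum>((\<lambda>x. A *v x) ` X)"
    by (simp add: sum.reindex inj_on_subset)
  then show ?thesis
    using assms(2) by (simp add: vec.sum)
qed

lemma orth_subgroupD:
  assumes "orth_subgroup S" "A \<in> S"
  shows "orthogonal_matrix A" and "transpose A \<in> S"
  using assms orthogonal_matrix_inv unfolding orth_subgroup_def by (metis mem_Collect_eq subsetD)+

lemma orth_subgroup_image_eqI:
  assumes "orth_subgroup S" "A \<in> S" "\<And>B x. B \<in> S \<Longrightarrow> x \<in> X \<Longrightarrow> B *v x \<in> X"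
  shows "(\<lambda>x. A *v x) ` X = X"
proof
  show "(\<lambda>x. A *v x) ` X \<subseteq> X"
    using assms(2,3) by auto
  show "X \<subseteq> (\<lambda>x. A *v x) ` X"
  proof
    fix x assume "x \<in> X"
    have "x = A *v (transpose A *v x)"
      using orth_subgroupD(1)[OF assms(1,2)]
      by (metis matrix_vector_mul_assoc matrix_vector_mul_lid orthogonal_matrix_def)
    then show "x \<in> (\<lambda>x. A *v x) ` X"
      using assms(3)[OF orth_subgroupD(2)[OF assms(1,2)] \<open>x \<in> X\<close>] by blast
  qed
qed

definition matrix_orbit :: "(real^'n^'n) set \<Rightarrow> real^'n \<Rightarrow> (real^'n) set" where
  "matrix_orbit S u = (\<lambda>A. A *v u) ` S"

lemma matrix_orbit_closed:
  assumes "orth_subgroup S" "A \<in> S" "b \<in> matrix_orbit S u"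
  shows "A *v b \<in> matrix_orbit S u"
  using assms unfolding matrix_orbit_def orth_subgroup_def
  by (auto simp: matrix_vector_mul_assoc)

lemma mem_matrix_orbit_self:
  assumes "orth_subgroup S"
  shows "u \<in> matrix_orbit S u"
  using assms unfolding matrix_orbit_def orth_subgroup_def by force

lemma matrix_orbit_subset_sphere:
  assumes "orth_subgroup S" "u \<in> sphere 0 1"
  shows "matrix_orbit S u \<subseteq> sphere 0 1"
  using assms orth_subgroupD(1) orthogonal_matrix_norm unfolding matrix_orbit_def by fastforce

lemma bdd_above_inner_image:
  fixes K :: "'a::real_inner set"
  assumes "bounded K"
  shows "bdd_above ((\<lambda>x. x \<bullet> u) ` K)"
  using assms by (intro bounded_imp_bdd_above bounded_linear_image bounded_linear_inner_left)

lemma support_fn_upper: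
  assumes "bounded K" "x \<in> K"
  shows "x \<bullet> u \<le> support_fn K u"
  unfolding support_fn_def using assms(2) bdd_above_inner_image[OF assms(1)] by (rule cSUP_upper)

lemma support_fn_least:
  assumes "K \<noteq> {}" "\<And>x. x \<in> K \<Longrightarrow> x \<bullet> u \<le> c"
  shows "support_fn K u \<le> c"
  unfolding support_fn_def using assms by (rule cSUP_least)

lemma support_fn_mono:
  assumes "K \<noteq> {}" "K \<subseteq> L" "bounded L"
  shows "support_fn K u \<le> support_fn L u"
  using assms support_fn_upper[OF assms(3)] by (intro support_fn_least) auto

lemma support_fn_matrix_vector_mul:
  "support_fn K (A *v u) = support_fn ((\<lambda>x. transpose A *v x) ` K) u"
proof -
  have "x \<bullet> (A *v u) = (transpose A *v x) \<bullet> u" for x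
    by (metis inner_commute inner_matrix_vector_mul_transpose)
  then show ?thesis
    unfolding support_fn_def image_image by simp
qed

lemma support_fn_invariant:
  assumes "orth_subgroup S" "\<forall>B\<in>S. (\<lambda>x. B *v x) ` K = K" "A \<in> S"
  shows "support_fn K (A *v u) = support_fn K u"
proof -
  have "(\<lambda>x. transpose A *v x) ` K = K"
    using assms orth_subgroupD(2) by blast
  then show ?thesis
    by (simp only: support_fn_matrix_vector_mul)
qed

lemma support_fn_le_lipschitz:
  assumes "K \<noteq> {}" "\<And>x. x \<in> K \<Longrightarrow> norm x \<le> R"
  shows "support_fn K u \<le> support_fn K v + R * norm (u - v)"
proof (rule support_fn_least[OF assms(1)])
  fix x assume x: "x \<in> K"
  then have "bounded K"
    using assms(2) bounded_iff by blast
  have "x \<bullet> u = x \<bullet> v + x \<bullet> (u - v)"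
    by (simp add: inner_diff_right)
  also have "x \<bullet> (u - v) \<le> norm x * norm (u - v)"
    by (rule norm_cauchy_schwarz)
  also have "\<dots> \<le> R * norm (u - v)"
    using assms(2)[OF x] by (simp add: mult_right_mono)
  finally show "x \<bullet> u \<le> support_fn K v + R * norm (u - v)"
    using support_fn_upper[OF \<open>bounded K\<close> x, of v] by linarith
qed

lemma continuous_on_support_fn:
  assumes "bounded K" "K \<noteq> {}"
  shows "continuous_on X (support_fn K)"
proof -
  obtain R where R: "R > 0" "\<And>x. x \<in> K \<Longrightarrow> norm x \<le> R"
    using assms(1) bounded_pos by blast
  have "R-lipschitz_on X (support_fn K)"
  proof (rule lipschitz_onI)
    fix u v
    show "dist (support_fn K u) (support_fn K v) \<le> R * dist u v"
      using support_fn_le_lipschitz[OF assms(2) R(2), of u v]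
        support_fn_le_lipschitz[OF assms(2) R(2), of v u]
      by (simp add: dist_real_def dist_norm norm_minus_commute abs_le_iff)
  qed (use R in auto)
  then show ?thesis
    by (rule lipschitz_on_continuous_on)
qed

lemma support_fn_attains_min_on_sphere:
  fixes K :: "(real^'n) set"
  assumes "bounded K" "K \<noteq> {}"
  obtains u0 where "u0 \<in> sphere 0 1" "\<And>u. u \<in> sphere 0 1 \<Longrightarrow> support_fn K u0 \<le> support_fn K u"
proof -
  have "sphere (0::real^'n) 1 \<noteq> {}"
    by (simp add: sphere_eq_empty)
  then show ?thesis
    using continuous_attains_inf[OF compact_sphere _ continuous_on_support_fn[OF assms]] that
    by blast
qed

lemma extreme_point_of_unit_vector:
  fixes a :: "'a::real_inner"
  assumes "a \<in> C" "C \<subseteq> cball 0 1" "norm a = 1"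
  shows "a extreme_point_of C"
  unfolding extreme_point_of_def
proof (intro conjI ballI notI)
  show "a \<in> C" by fact
  fix p q assume p: "p \<in> C" and q: "q \<in> C" and a: "a \<in> open_segment p q"
  then have "a \<noteq> p"
    by (auto simp: open_segment_def)
  from a obtain t where t: "0 < t" "t < 1" "a = (1 - t) *\<^sub>R p + t *\<^sub>R q"
    unfolding in_segment(2) by blast
  have np: "norm p \<le> 1" and nq: "norm q \<le> 1"
    using p q assms(2) by auto
  have pa: "p \<bullet> a \<le> 1" and qa: "q \<bullet> a \<le> 1"
    using norm_cauchy_schwarz[of p a] norm_cauchy_schwarz[of q a] np nq assms(3) by auto
  have "1 = a \<bullet> a"
    using assms(3) by (simp add: dot_square_norm)
  also have "\<dots> = (1 - t) * (p \<bullet> a) + t * (q \<bullet> a)"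
    using t(3) by (simp add: inner_add_left)
  finally have "1 = (1 - t) * (p \<bullet> a) + t * (q \<bullet> a)" .
  moreover have "t * (q \<bullet> a) \<le> t" and "(1 - t) * (p \<bullet> a) \<le> 1 - t"
    using mult_left_mono[OF qa, of t] mult_left_mono[OF pa, of "1 - t"] t by auto
  ultimately have "1 - t \<le> (1 - t) * (p \<bullet> a)"
    by linarith
  then have "(1 - t) * 1 \<le> (1 - t) * (p \<bullet> a)"
    by simp
  then have "1 \<le> p \<bullet> a"
    using t(2) by (subst (asm) mult_le_cancel_left_pos) auto
  then have "p \<bullet> a = 1"
    using pa by linarith
  have "(norm (p - a))\<^sup>2 = p \<bullet> p - 2 * (p \<bullet> a) + a \<bullet> a"
    by (simp add: power2_norm_eq_inner inner_diff_left inner_diff_right inner_commute)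
  also have "\<dots> \<le> 0"
    using \<open>p \<bullet> a = 1\<close> np assms(3) by (simp add: dot_square_norm power_le_one)
  finally have "(norm (p - a))\<^sup>2 \<le> 0" .
  then show False
    using \<open>a \<noteq> p\<close> by simp
qed

lemma finite_if_polytope_convex_hull_sphere:
  fixes B :: "'a::euclidean_space set"
  assumes "B \<subseteq> sphere 0 1" "polytope (convex hull B)"
  shows "finite B"
proof -
  obtain V where V: "finite V" "convex hull B = convex hull V"
    using assms(2) unfolding polytope_def by auto
  have "convex hull B \<subseteq> cball 0 1"
    using assms(1) by (intro hull_minimal) auto
  then have "b extreme_point_of convex hull V" if "b \<in> B" for b
    using that assms(1) V(2) hull_inc[of b B]
    by (intro extreme_point_of_unit_vector) auto
  then have "B \<subseteq> V"
    using extreme_point_of_convex_hull by blast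
  then show ?thesis
    using V(1) finite_subset by blast
qed

lemma abs_le_card_mult_if_sum_eq_0:
  fixes f :: "'a \<Rightarrow> real"
  assumes "finite B" "(\<Sum>b\<in>B. f b) = 0" "\<And>b. b \<in> B \<Longrightarrow> f b \<le> r" "b \<in> B"
  shows "\<bar>f b\<bar> \<le> real (card B) * r"
proof -
  have "1 \<le> card B"
    using assms(1,4) card_gt_0_iff by (metis Suc_leI One_nat_def empty_iff)
  then have card: "real (card (B - {b})) = real (card B) - 1"
    using assms(1,4) by (simp add: of_nat_diff)
  have "(\<Sum>b'\<in>B - {b}. f b') \<le> real (card (B - {b})) * r"
    using assms(3) by (intro sum_bounded_above) auto
  moreover have "f b + (\<Sum>b'\<in>B - {b}. f b') = 0"
    using assms(2) sum.remove[OF assms(1,4), of f] by simp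
  ultimately have lower: "- ((real (card B) - 1) * r) \<le> f b"
    unfolding card by linarith
  have c1: "1 \<le> real (card B)"
    using \<open>1 \<le> card B\<close> by simp
  have "0 \<le> real (card B) * r"
    using sum_bounded_above[of B f r] assms(2,3) by simp
  then have "0 \<le> r"
    using c1 by (simp add: zero_le_mult_iff)
  then have "r \<le> real (card B) * r" and "(real (card B) - 1) * r \<le> real (card B) * r"
    using mult_right_mono[OF c1] by (auto simp: algebra_simps)
  then show ?thesis
    using lower assms(3)[OF assms(4)] unfolding abs_le_iff by linarith
qed

lemma bounded_slabs_of_span_eq_UNIV:
  fixes B :: "'a::euclidean_space set"
  assumes "finite B" "span B = UNIV"
  shows "bounded {x. \<forall>b\<in>B. \<bar>b \<bullet> x\<bar> \<le> M}"
proof -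
  have "\<exists>c. (\<Sum>b\<in>B. c b *\<^sub>R b) = i" for i :: 'a
  proof -
    have "i \<in> span B"
      using assms(2) by simp
    then show ?thesis
      unfolding span_finite[OF assms(1)] by blast
  qed
  then obtain c where c: "\<And>i. (\<Sum>b\<in>B. c i b *\<^sub>R b) = i"
    by metis
  have "norm x \<le> (\<Sum>i\<in>Basis. \<Sum>b\<in>B. \<bar>c i b\<bar> * M)" if x: "\<forall>b\<in>B. \<bar>b \<bullet> x\<bar> \<le> M" for x
  proof -
    have "\<bar>x \<bullet> i\<bar> \<le> (\<Sum>b\<in>B. \<bar>c i b\<bar> * M)" for i
    proof -
      have "\<bar>x \<bullet> i\<bar> = \<bar>\<Sum>b\<in>B. c i b * (b \<bullet> x)\<bar>"
        by (subst c[of i, symmetric]) (simp add: inner_sum_right inner_commute)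
      also have "\<dots> \<le> (\<Sum>b\<in>B. \<bar>c i b\<bar> * \<bar>b \<bullet> x\<bar>)"
        by (rule order_trans[OF sum_abs]) (simp add: abs_mult)
      also have "\<dots> \<le> (\<Sum>b\<in>B. \<bar>c i b\<bar> * M)"
        using x by (intro sum_mono mult_left_mono) auto
      finally show ?thesis .
    qed
    then show ?thesis
      by (rule order_trans[OF norm_le_l1 sum_mono])
  qed
  then show ?thesis
    unfolding bounded_iff by blast
qed

lemma polytope_halfspaces_of_balanced_spanning:
  fixes B :: "'a::euclidean_space set"
  assumes "finite B" "span B = UNIV" "\<Sum>B = 0"
  shows "polytope {x. \<forall>b\<in>B. b \<bullet> x \<le> r}"
proof -
  have "{x. \<forall>b\<in>B. b \<bullet> x \<le> r} = \<Inter>((\<lambda>b. {x. b \<bullet> x \<le> r}) ` B)"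
    by auto
  moreover have "polyhedron (\<Inter>((\<lambda>b. {x. b \<bullet> x \<le> r}) ` B))"
    by (rule polyhedron_Inter) (use assms(1) polyhedron_halfspace_le in auto)
  ultimately have "polyhedron {x. \<forall>b\<in>B. b \<bullet> x \<le> r}"
    by simp
  moreover have "(\<Sum>b\<in>B. b \<bullet> x) = 0" for x
    using assms(3) by (simp flip: inner_sum_left)
  then have "{x. \<forall>b\<in>B. b \<bullet> x \<le> r} \<subseteq> {x. \<forall>b\<in>B. \<bar>b \<bullet> x\<bar> \<le> real (card B) * r}"
    using abs_le_card_mult_if_sum_eq_0[OF assms(1)] by blast
  then have "bounded {x. \<forall>b\<in>B. b \<bullet> x \<le> r}"
    using bounded_slabs_of_span_eq_UNIV[OF assms(1,2)] bounded_subset by blast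
  ultimately show ?thesis
    by (simp add: polytope_eq_bounded_polyhedron)
qed

lemma halfspaces_of_balanced_spanning_zero:
  fixes B :: "'a::euclidean_space set"
  assumes "finite B" "span B = UNIV" "\<Sum>B = 0"
  shows "{x. \<forall>b\<in>B. b \<bullet> x \<le> 0} = {0}"
proof (intro equalityI subsetI)
  fix x assume "x \<in> {x. \<forall>b\<in>B. b \<bullet> x \<le> 0}"
  moreover have "(\<Sum>b\<in>B. b \<bullet> x) = 0"
    using assms(3) by (simp flip: inner_sum_left)
  ultimately have "\<bar>b \<bullet> x\<bar> \<le> real (card B) * 0" if "b \<in> B" for b
    using abs_le_card_mult_if_sum_eq_0[OF assms(1), of "\<lambda>b. b \<bullet> x" 0 b] that by simp
  then have orth: "orthogonal x b" if "b \<in> B" for b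
    using that by (simp add: orthogonal_def inner_commute)
  have "orthogonal x x"
    by (rule orthogonal_to_span[of x B x]) (use assms(2) orth in auto)
  then show "x \<in> {0}"
    by (simp add: orthogonal_def)
qed auto

lemma matrix_orbit_finite:
  assumes "orth_subgroup S" "spanning_property S" "u \<in> sphere 0 1"
  shows "finite (matrix_orbit S u)"
  using assms matrix_orbit_subset_sphere finite_if_polytope_convex_hull_sphere
  unfolding spanning_property_def matrix_orbit_def by blast

lemma matrix_orbit_span:
  fixes S :: "(real^'n^'n) set"
  assumes "spanning_property S" "u \<in> sphere 0 1"
  shows "span (matrix_orbit S u) = UNIV"
proof -
  have "aff_dim (matrix_orbit S u) = DIM(real^'n)"
    using assms unfolding spanning_property_def matrix_orbit_def by (simp add: aff_dim_convex_hull)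
  then have "affine hull (matrix_orbit S u) = UNIV"
    by (simp only: aff_dim_eq_full)
  then show ?thesis
    using affine_hull_subset_span[of "matrix_orbit S u"] by auto
qed

lemma matrix_orbit_sum_eq_0:
  fixes S :: "(real^'n^'n) set"
  assumes "orth_subgroup S" "spanning_property S" "u \<in> sphere 0 1"
  shows "\<Sum>(matrix_orbit S u) = 0"
proof (rule ccontr)
  define c where "c = \<Sum>(matrix_orbit S u)"
  define a where "a = c /\<^sub>R norm c"
  assume "c \<noteq> 0"
  then have "a \<in> sphere 0 1"
    unfolding a_def by simp
  then have "aff_dim (convex hull (matrix_orbit S a)) = int CARD('n)"
    using assms(2) unfolding spanning_property_def matrix_orbit_def by blast
  moreover have "A *v c = c" if "A \<in> S" for A
    unfolding c_def using that assms(1)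
    by (intro orthogonal_matrix_vector_mul_sum orth_subgroupD(1) orth_subgroup_image_eqI
        matrix_orbit_closed)
  then have "matrix_orbit S a = {a}"
    using mem_matrix_orbit_self[OF assms(1)] unfolding matrix_orbit_def a_def
    by (auto simp: matrix_vector_mult_scaleR)
  ultimately show False
    by simp
qed

definition orbit_polytope :: "(real^'n^'n) set \<Rightarrow> real^'n \<Rightarrow> real \<Rightarrow> (real^'n) set" where
  "orbit_polytope S u r = {x. \<forall>b\<in>matrix_orbit S u. b \<bullet> x \<le> r}"

lemma orbit_polytope_zero:
  assumes "orth_subgroup S" "spanning_property S" "u \<in> sphere 0 1"
  shows "orbit_polytope S u 0 = {0}"
  unfolding orbit_polytope_def using assms
  by (intro halfspaces_of_balanced_spanning_zero matrix_orbit_finite matrix_orbit_span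
      matrix_orbit_sum_eq_0)

lemma polytope_orbit_polytope:
  assumes "orth_subgroup S" "spanning_property S" "u \<in> sphere 0 1"
  shows "polytope (orbit_polytope S u r)"
  unfolding orbit_polytope_def using assms
  by (intro polytope_halfspaces_of_balanced_spanning matrix_orbit_finite matrix_orbit_span
      matrix_orbit_sum_eq_0)

lemma orbit_polytope_in_K0:
  assumes "orth_subgroup S" "spanning_property S" "u \<in> sphere 0 1" "0 \<le> r"
  shows "orbit_polytope S u r \<in> K0 S"
proof -
  have "polytope (orbit_polytope S u r)"
    using assms(1-3) by (rule polytope_orbit_polytope)
  moreover have "A *v x \<in> orbit_polytope S u r"
    if A: "A \<in> S" and x: "x \<in> orbit_polytope S u r" for A x
    unfolding orbit_polytope_def mem_Collect_eq
  proof
    fix b assume "b \<in> matrix_orbit S u"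
    then have "transpose A *v b \<in> matrix_orbit S u"
      using assms(1) A orth_subgroupD(2) matrix_orbit_closed by blast
    then have "(transpose A *v b) \<bullet> x \<le> r"
      using x unfolding orbit_polytope_def by blast
    then show "b \<bullet> (A *v x) \<le> r"
      by (metis inner_commute inner_matrix_vector_mul_transpose)
  qed
  then have "\<forall>A\<in>S. (\<lambda>x. A *v x) ` orbit_polytope S u r = orbit_polytope S u r"
    using orth_subgroup_image_eqI[OF assms(1)] by blast
  moreover have "0 \<in> orbit_polytope S u r"
    using assms(4) unfolding orbit_polytope_def by simp
  ultimately show ?thesis
    unfolding K0_def convex_body_def by (auto simp: polytope_imp_compact polytope_imp_convex)
qed

lemma subset_orbit_polytope_support_fn:
  assumes "orth_subgroup S" "K \<in> K0 S"
  shows "K \<subseteq> orbit_polytope S u (support_fn K u)"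
proof
  fix x assume "x \<in> K"
  have "b \<bullet> x \<le> support_fn K u" if b: "b \<in> matrix_orbit S u" for b
  proof -
    obtain A where "A \<in> S" "b = A *v u"
      using b unfolding matrix_orbit_def by blast
    moreover have "bounded K"
      using assms(2) unfolding K0_def convex_body_def by (simp add: compact_imp_bounded)
    ultimately show ?thesis
      using support_fn_upper[OF _ \<open>x \<in> K\<close>, of b] support_fn_invariant[OF assms(1)] assms(2)
      unfolding K0_def by (simp add: inner_commute)
  qed
  then show "x \<in> orbit_polytope S u (support_fn K u)"
    unfolding orbit_polytope_def by blast
qed

lemma support_fn_orbit_polytope_le:
  assumes "orth_subgroup S" "orbit_polytope S u r \<noteq> {}"
  shows "support_fn (orbit_polytope S u r) u \<le> r"
  using assms mem_matrix_orbit_self[OF assms(1)] unfolding orbit_polytope_def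
  by (intro support_fn_least) (auto simp: inner_commute)

lemma support_fn_orbit_polytope_minimum:
  fixes S :: "(real^'n^'n) set"
  assumes "orth_subgroup S" "spanning_property S" "K \<in> K0 S" "u \<in> sphere 0 1"
    "\<And>v. v \<in> sphere 0 1 \<Longrightarrow> support_fn K u \<le> support_fn K v"
  shows "(INF v\<in>sphere 0 1. support_fn (orbit_polytope S u (support_fn K u)) v) = support_fn K u"
    and "(INF v\<in>sphere 0 1. support_fn K v) = support_fn K u"
proof -
  let ?P = "orbit_polytope S u (support_fn K u)"
  have "K \<subseteq> ?P" "K \<noteq> {}"
    using assms(1,3) subset_orbit_polytope_support_fn unfolding K0_def convex_body_def by auto
  moreover have "bounded ?P"
    using polytope_orbit_polytope[OF assms(1,2,4)] by (rule polytope_imp_bounded)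
  ultimately have "support_fn K v \<le> support_fn ?P v" for v
    by (intro support_fn_mono)
  moreover have "support_fn ?P u \<le> support_fn K u"
    using \<open>K \<subseteq> ?P\<close> \<open>K \<noteq> {}\<close> by (intro support_fn_orbit_polytope_le[OF assms(1)]) auto
  ultimately show "(INF v\<in>sphere 0 1. support_fn ?P v) = support_fn K u"
    and "(INF v\<in>sphere 0 1. support_fn K v) = support_fn K u"
    using cINF_eq_minimum[of u "sphere 0 1" "support_fn ?P"]
      cINF_eq_minimum[of u "sphere 0 1" "support_fn K"] assms(4,5)
    by (smt (verit))+
qed

lemma support_fn_pos_if_measure_pos:
  assumes "orth_subgroup S" "spanning_property S" "K \<in> K0 S" "measure lebesgue K > 0"
    "u \<in> sphere 0 1"
  shows "0 < support_fn K u"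
proof -
  have "bounded K" "0 \<in> K"
    using assms(3) unfolding K0_def convex_body_def by (auto simp: compact_imp_bounded)
  then have "0 \<le> support_fn K u"
    using support_fn_upper[of K 0 u] by simp
  moreover have "support_fn K u \<noteq> 0"
  proof
    assume "support_fn K u = 0"
    then have "K \<subseteq> {0}"
      using subset_orbit_polytope_support_fn[OF assms(1,3), of u]
        orbit_polytope_zero[OF assms(1,2,5)] by simp
    then have "negligible K"
      using negligible_subset negligible_sing by blast
    then show False
      using assms(4) negligible_imp_measure0 by fastforce
  qed
  ultimately show ?thesis
    by simp
qed

lemma convex_subset_closed_if_negligible_Diff:
  fixes K L :: "'a::euclidean_space set"
  assumes "convex L" "interior L \<noteq> {}" "closed K" "negligible (L - K)"
  shows "L \<subseteq> K"
proof -
  have "interior L - K \<subseteq> L - K"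
    using interior_subset by blast
  then have "interior L - K = {}"
    using assms(3,4) open_not_negligible negligible_subset
    by (metis open_Diff open_interior)
  then have "closure (interior L) \<subseteq> K"
    using assms(3) closure_minimal by blast
  then show ?thesis
    using convex_closure_interior[OF assms(1,2)] closure_subset by blast
qed

lemma negligible_Diff_if_measure_le:
  assumes "K \<subseteq> L" "K \<in> lmeasurable" "L \<in> lmeasurable"
    "measure lebesgue L \<le> measure lebesgue K"
  shows "negligible (L - K)"
proof -
  have "measure lebesgue (L - K) = measure lebesgue L - measure lebesgue K"
    using assms(1-3) by (intro measure_Diff) (auto simp: fmeasurable_def)
  moreover have "measure lebesgue K \<le> measure lebesgue L"
    using assms(1-3) by (intro measure_mono_fmeasurable) (auto simp: fmeasurableD)
  ultimately show ?thesis
    using assms(2-4) by (simp add: negligible_iff_measure fmeasurable_Diff fmeasurableD)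
qed

lemma convex_eq_if_subset_measure_le:
  fixes K L :: "'a::euclidean_space set"
  assumes "compact K" "convex K" "measure lebesgue K > 0"
    "K \<subseteq> L" "convex L" "L \<in> lmeasurable" "measure lebesgue L \<le> measure lebesgue K"
  shows "L = K"
proof -
  have "interior K \<noteq> {}"
    using assms(3) negligible_convex_interior[OF assms(2)] negligible_imp_measure0 by force
  then have "interior L \<noteq> {}"
    using interior_mono[OF assms(4)] by blast
  moreover have "negligible (L - K)"
    using assms(4) lmeasurable_compact[OF assms(1)] assms(6,7) by (rule negligible_Diff_if_measure_le)
  ultimately have "L \<subseteq> K"
    using convex_subset_closed_if_negligible_Diff assms(1,5) compact_imp_closed by blast
  then show ?thesis
    using assms(4) by blast
qed

theorem theorem4p2:
  fixes S :: "(real^'n^'n) set" and \<Omega> :: "(real^'n) set"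
  assumes "CARD('n) \<ge> 2"
    and "orth_subgroup S" and "discrete_set S" and "spanning_property S"
    and "\<Omega> \<in> K0 S" and "measure lebesgue \<Omega> > 0"
    and "\<forall>K\<in>K0 S. measure lebesgue K > 0 \<longrightarrow> F_minus_inf K \<le> F_minus_inf \<Omega>"
  shows "polytope \<Omega> \<and> (\<forall>A\<in>S. (\<lambda>x. A *v x) ` \<Omega> = \<Omega>)"
proof -
  have "compact \<Omega>" "convex \<Omega>" "\<Omega> \<noteq> {}" and inv: "\<forall>A\<in>S. (\<lambda>x. A *v x) ` \<Omega> = \<Omega>"
    using assms(5) unfolding K0_def convex_body_def by auto
  then obtain u where u: "u \<in> sphere 0 1"
    and u_min: "\<And>v. v \<in> sphere 0 1 \<Longrightarrow> support_fn \<Omega> u \<le> support_fn \<Omega> v"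
    using support_fn_attains_min_on_sphere[OF compact_imp_bounded] by blast
  define r where "r = support_fn \<Omega> u"
  define P where "P = orbit_polytope S u r"
  have "r > 0"
    unfolding r_def using assms(2,4,5,6) u by (rule support_fn_pos_if_measure_pos)
  have "polytope P"
    unfolding P_def using assms(2,4) u by (rule polytope_orbit_polytope)
  have "P \<in> K0 S"
    unfolding P_def using assms(2,4) u \<open>r > 0\<close> by (intro orbit_polytope_in_K0) auto
  have "\<Omega> \<subseteq> P"
    unfolding P_def r_def using assms(2,5) by (rule subset_orbit_polytope_support_fn)
  have "P \<in> lmeasurable"
    using \<open>polytope P\<close> by (simp add: polytope_imp_compact lmeasurable_compact)
  then have "measure lebesgue \<Omega> \<le> measure lebesgue P"
    using \<open>\<Omega> \<subseteq> P\<close> \<open>compact \<Omega>\<close>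
    by (intro measure_mono_fmeasurable) (auto simp: lmeasurable_compact fmeasurableD)
  then have "F_minus_inf P \<le> F_minus_inf \<Omega>"
    using assms(6,7) \<open>P \<in> K0 S\<close> by auto
  moreover note support_fn_orbit_polytope_minimum[OF assms(2,4,5) u u_min]
  ultimately have "measure lebesgue P \<le> measure lebesgue \<Omega>"
    using \<open>r > 0\<close> unfolding F_minus_inf_def vol_V_def P_def r_def by (simp add: divide_le_cancel)
  then have "P = \<Omega>"
    using \<open>compact \<Omega>\<close> \<open>convex \<Omega>\<close> assms(6) \<open>\<Omega> \<subseteq> P\<close> \<open>polytope P\<close> \<open>P \<in> lmeasurable\<close>
    by (intro convex_eq_if_subset_measure_le) (auto simp: polytope_imp_convex)
  then show ?thesis
    using \<open>polytope P\<close> inv by simp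
qed

end
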